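(* Let $X$ be a compact subset of a real normed vector space $(V,\|\cdot\|)$. For all $u,v\in\Delta(X)$, $d_1(u,v)=d_2(u,v)=d_2^+(u,v)$.
   Context: $E=\mathcal C(X)$ is the space of continuous real functions on $X$. $\Delta(X)$ is the set of Borel probability measures on $X$, with $u(f)=\int f\,du$. - $D_1=\{f\in E:\ \forall x,y\in X,\ \forall a,b\ge 0,\ af(x)-bf(y)\le\|ax-by\|\}$, and $d_1(u,v)=\sup_{f\in D_1}\big(u(f)-v(f)\big)$. - $D_2=\{(f,g)\in E\times E:\ \forall x,y\in X,\ \forall a,b\ge0,\ af(x)+bg(y)\le\|ax-by\|\}$, and $d_2(u,v)=\sup_{(f,g)\in D_2}\big(u(f)+v(g)\big)$. - For $\varepsilon>0$, $D_2^\varepsilon=\{(f,g)\in E\times E:\ \forall x,y\in X,\ \forall a,b\in[0,1],\ af(x)+bg(y)\le\varepsilon+\|ax-by\|\}$ and $d_2^\varepsilon(u,v)=\sup_{(f,g)\in D_2^\varepsilon}\big(u(f)+v(g)\big)$. Then $d_2^+(u,v)=\inf_{\varepsilon>0}d_2^\varepsilon(u,v)$. *)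

theory Defs
  imports "HOL-Probability.Probability"
begin

definition Delta :: "'v::real_normed_vector set \<Rightarrow> 'v measure set" where
  "Delta X = {u. prob_space u \<and> sets u = sets (restrict_space borel X)}"

definition D1 :: "'v::real_normed_vector set \<Rightarrow> ('v \<Rightarrow> real) set" where
  "D1 X = {f. continuous_on X f \<and>
     (\<forall>x\<in>X. \<forall>y\<in>X. \<forall>a::real. \<forall>b::real. a \<ge> 0 \<longrightarrow> b \<ge> 0 \<longrightarrow>
        a * f x - b * f y \<le> norm (a *\<^sub>R x - b *\<^sub>R y))}"

definition d1 :: "'v::real_normed_vector set \<Rightarrow> 'v measure \<Rightarrow> 'v measure \<Rightarrow> real" where
  "d1 X u v = (SUP f\<in>D1 X. integral\<^sup>L u f - integral\<^sup>L v f)"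

definition D2 :: "'v::real_normed_vector set \<Rightarrow> (('v \<Rightarrow> real) \<times> ('v \<Rightarrow> real)) set" where
  "D2 X = {(f, g). continuous_on X f \<and> continuous_on X g \<and>
     (\<forall>x\<in>X. \<forall>y\<in>X. \<forall>a::real. \<forall>b::real. a \<ge> 0 \<longrightarrow> b \<ge> 0 \<longrightarrow>
        a * f x + b * g y \<le> norm (a *\<^sub>R x - b *\<^sub>R y))}"

definition d2 :: "'v::real_normed_vector set \<Rightarrow> 'v measure \<Rightarrow> 'v measure \<Rightarrow> real" where
  "d2 X u v = (SUP fg\<in>D2 X. integral\<^sup>L u (fst fg) + integral\<^sup>L v (snd fg))"

definition D2eps :: "'v::real_normed_vector set \<Rightarrow> real \<Rightarrow> (('v \<Rightarrow> real) \<times> ('v \<Rightarrow> real)) set" where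
  "D2eps X \<epsilon> = {(f, g). continuous_on X f \<and> continuous_on X g \<and>
     (\<forall>x\<in>X. \<forall>y\<in>X. \<forall>a\<in>{0..1::real}. \<forall>b\<in>{0..1::real}.
        a * f x + b * g y \<le> \<epsilon> + norm (a *\<^sub>R x - b *\<^sub>R y))}"

definition d2eps :: "'v::real_normed_vector set \<Rightarrow> real \<Rightarrow> 'v measure \<Rightarrow> 'v measure \<Rightarrow> real" where
  "d2eps X \<epsilon> u v = (SUP fg\<in>D2eps X \<epsilon>. integral\<^sup>L u (fst fg) + integral\<^sup>L v (snd fg))"

definition d2plus :: "'v::real_normed_vector set \<Rightarrow> 'v measure \<Rightarrow> 'v measure \<Rightarrow> real" where
  "d2plus X u v = (INF \<epsilon>\<in>{0<..}. d2eps X \<epsilon> u v)"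

end

theory Submission
  imports Defs
begin

(* All three quantities are suprema of linear functionals
   fg \<mapsto> \<integral>f du + \<integral>g dv over sets of continuous test pairs on the compact set X.
   - d1 \<le> d2: every f \<in> D1 gives the pair (f, -f) \<in> D2.
   - d2 \<le> d1: for (f, g) \<in> D2 the "homogeneous envelope"
       F p = sup {a f(x') - \<parallel>a x' - p\<parallel> | a \<ge> 0, x' \<in> X}
     lies in D1 and satisfies f \<le> F \<le> -g on X, so the pair (f, g) is dominated
     by (F, -F).
   - d2 \<le> d2^\<epsilon> because D2 \<subseteq> D2^\<epsilon>, and d2^\<epsilon> \<le> d2 + 2\<epsilon> because shifting
     a pair of D2^\<epsilon> down by \<epsilon> yields a pair of D2 (rescale a, b by max a b).
     Hence the infimum d2^+ equals d2. *)

lemma prob_space_Delta: "u \<in> Delta X \<Longrightarrow> prob_space u"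
  unfolding Delta_def by simp

lemma space_Delta: "u \<in> Delta X \<Longrightarrow> space u = X"
  unfolding Delta_def by (auto dest!: sets_eq_imp_space_eq simp: space_restrict_space)

lemma integrable_Delta:
  fixes f :: "'v::real_normed_vector \<Rightarrow> real"
  assumes "compact X" "u \<in> Delta X" "continuous_on X f"
  shows "integrable u f"
proof -
  interpret prob_space u using prob_space_Delta[OF assms(2)] .
  have "sets u = sets (restrict_space borel X)"
    using assms(2) unfolding Delta_def by simp
  then have meas: "f \<in> borel_measurable u"
    using borel_measurable_continuous_on_restrict[OF assms(3)] by (simp cong: measurable_cong_sets)
  obtain B where "\<forall>y\<in>f ` X. norm y \<le> B"
    using compact_imp_bounded[OF compact_continuous_image[OF assms(3,1)]] bounded_iff by blast
  then have "AE x in u. norm (f x) \<le> B"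
    using space_Delta[OF assms(2)] by (intro AE_I2) auto
  then show ?thesis using meas by (rule integrable_const_bound)
qed

lemma integral_mono_Delta:
  fixes f g :: "'v::real_normed_vector \<Rightarrow> real"
  assumes "compact X" "u \<in> Delta X" "continuous_on X f" "continuous_on X g"
    and "\<And>x. x \<in> X \<Longrightarrow> f x \<le> g x"
  shows "integral\<^sup>L u f \<le> integral\<^sup>L u g"
  using assms integrable_Delta[OF assms(1,2)] space_Delta[OF assms(2)]
  by (intro integral_mono) auto

lemma measure_space_Delta: "u \<in> Delta X \<Longrightarrow> measure u (space u) = 1"
  using prob_space.prob_space[OF prob_space_Delta] by blast

lemma D2_subset_D2eps: "e \<ge> 0 \<Longrightarrow> D2 X \<subseteq> D2eps X e"
  unfolding D2_def D2eps_def by auto (smt (verit, best))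

text \<open>Taking (a, b) = (1, 0) resp. (0, 1) bounds both components of a pair in
  D2eps by max norm + e; this makes every value of the functional bounded.\<close>
lemma D2eps_value_bound:
  assumes "compact X" "u \<in> Delta X" "v \<in> Delta X" and M: "\<forall>x\<in>X. norm x \<le> M"
    and "(f, g) \<in> D2eps X e"
  shows "integral\<^sup>L u f + integral\<^sup>L v g \<le> 2 * (M + e)"
proof -
  have cont: "continuous_on X f" "continuous_on X g"
    and ineq: "\<And>x y a b. x \<in> X \<Longrightarrow> y \<in> X \<Longrightarrow> a \<in> {0..1} \<Longrightarrow> b \<in> {0..1} \<Longrightarrow>
        a * f x + b * g y \<le> e + norm (a *\<^sub>R x - b *\<^sub>R y)"
    using assms(5) unfolding D2eps_def by auto
  have "f x \<le> M + e" "g x \<le> M + e" if "x \<in> X" for x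
    using ineq[OF that that, of 1 0] ineq[OF that that, of 0 1] M that by auto
  then have "integral\<^sup>L u f \<le> M + e" "integral\<^sup>L v g \<le> M + e"
    using integral_mono_Delta[OF assms(1,2) cont(1), of "\<lambda>_. M + e"]
      integral_mono_Delta[OF assms(1,3) cont(2), of "\<lambda>_. M + e"]
    by (simp_all add: measure_space_Delta[OF assms(2)] measure_space_Delta[OF assms(3)])
  then show ?thesis by simp
qed

lemma bdd_above_D2eps_values:
  assumes "compact X" "u \<in> Delta X" "v \<in> Delta X"
  shows "bdd_above ((\<lambda>fg. integral\<^sup>L u (fst fg) + integral\<^sup>L v (snd fg)) ` D2eps X e)"
proof -
  obtain M where "\<forall>x\<in>X. norm x \<le> M"
    using compact_imp_bounded[OF assms(1)] bounded_iff by blast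
  then show ?thesis
    using D2eps_value_bound[OF assms] unfolding bdd_above_def by fastforce
qed

lemma bdd_above_D2_values:
  assumes "compact X" "u \<in> Delta X" "v \<in> Delta X"
  shows "bdd_above ((\<lambda>fg. integral\<^sup>L u (fst fg) + integral\<^sup>L v (snd fg)) ` D2 X)"
  using bdd_above_D2eps_values[OF assms, of 0] D2_subset_D2eps[of 0 X]
  by (meson bdd_above_mono image_mono order_refl)

lemma D1_imp_D2: "f \<in> D1 X \<Longrightarrow> (f, \<lambda>x. - f x) \<in> D2 X"
  unfolding D1_def D2_def by (auto intro!: continuous_intros)

lemma zero_in_D1: "(\<lambda>_. 0) \<in> D1 X"
  unfolding D1_def by simp

lemma D2_not_empty: "D2 X \<noteq> {}"
  using D1_imp_D2[OF zero_in_D1] by blast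

text \<open>For (f, g) \<in> D2 it lies
  between f and -g and belongs to D1; this is what turns D2-pairs into D1-functions.\<close>
definition hom_envelope :: "'v::real_normed_vector set \<Rightarrow> ('v \<Rightarrow> real) \<Rightarrow> 'v \<Rightarrow> real" where
  "hom_envelope X f p = (SUP (a, x') \<in> {0..} \<times> X. a * f x' - norm (a *\<^sub>R x' - p))"

context
  fixes X :: "'v::real_normed_vector set" and f g :: "'v \<Rightarrow> real"
  assumes D2_pair: "(f, g) \<in> D2 X"
begin

private abbreviation "F \<equiv> hom_envelope X f"

lemma D2_pair_ineq:
  "\<lbrakk>x \<in> X; y \<in> X; a \<ge> 0; b \<ge> 0\<rbrakk> \<Longrightarrow> a * f x + b * g y \<le> norm (a *\<^sub>R x - b *\<^sub>R y)"
  using D2_pair unfolding D2_def by auto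

text \<open>Every term of the supremum defining F y is bounded by -g y (take b = 1).\<close>
lemma hom_envelope_terms_bounded:
  assumes "y \<in> X"
  shows "\<forall>t \<in> (\<lambda>(a, x'). a * f x' - norm (a *\<^sub>R x' - y)) ` ({0..} \<times> X). t \<le> - g y"
  using D2_pair_ineq[of _ y _ 1] assms by fastforce

lemma hom_envelope_upper:
  assumes "y \<in> X" "a \<ge> 0" "x' \<in> X"
  shows "a * f x' - norm (a *\<^sub>R x' - y) \<le> F y"
proof -
  have "bdd_above ((\<lambda>(a, x'). a * f x' - norm (a *\<^sub>R x' - y)) ` ({0..} \<times> X))"
    using hom_envelope_terms_bounded[OF assms(1)] unfolding bdd_above_def by blast
  then show ?thesis
    unfolding hom_envelope_def using assms by (force intro: cSUP_upper2)
qed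

lemma hom_envelope_le_neg: "y \<in> X \<Longrightarrow> F y \<le> - g y"
  unfolding hom_envelope_def using hom_envelope_terms_bounded
  by (intro cSUP_least) auto

lemma le_hom_envelope: "x \<in> X \<Longrightarrow> f x \<le> F x"
  using hom_envelope_upper[of x 1 x] by simp

lemma hom_envelope_ge_neg_norm: "y \<in> X \<Longrightarrow> - norm y \<le> F y"
  using hom_envelope_upper[of y 0 y] by simp

text \<open>Positive homogeneity: the terms of the supremum defining b F y may use
  the point b y instead of y (divide by b; for b = 0 use f x' \<le> norm x').\<close>
lemma hom_envelope_scaled_term:
  assumes "y \<in> X" "x' \<in> X" "c \<ge> 0" "b \<ge> 0"
  shows "c * f x' - norm (c *\<^sub>R x' - b *\<^sub>R y) \<le> b * F y"
proof (cases "b = 0")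
  case True
  have "c * f x' \<le> c * norm x'"
    using D2_pair_ineq[OF assms(2,2), of 1 0] assms(3) by (simp add: mult_left_mono)
  then show ?thesis using True assms(3) by simp
next
  case False
  then have b: "b > 0" using assms(4) by simp
  have "b * ((c / b) * f x' - norm ((c / b) *\<^sub>R x' - y)) \<le> b * F y"
    using hom_envelope_upper[OF assms(1) _ assms(2), of "c / b"] b assms(3)
    by (simp add: mult_left_mono)
  moreover have "b * norm ((c / b) *\<^sub>R x' - y) = norm (c *\<^sub>R x' - b *\<^sub>R y)"
    using b by (simp add: scaleR_right_diff_distrib flip: norm_scaleR[of b, simplified abs_of_pos[OF b]])
  ultimately show ?thesis using b by (simp add: algebra_simps)
qed

text \<open>The defining inequality of D1 for the envelope: bound each term of a F x
  by the triangle inequality through the point a x and apply homogeneity.\<close>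
lemma hom_envelope_D1_ineq:
  assumes xy: "x \<in> X" "y \<in> X" and ab: "a \<ge> 0" "b \<ge> 0"
  shows "a * F x - b * F y \<le> norm (a *\<^sub>R x - b *\<^sub>R y)"
proof (cases "a = 0")
  case True
  then show ?thesis
    using mult_left_mono[OF hom_envelope_ge_neg_norm[OF xy(2)] ab(2)] ab by simp
next
  case False
  then have a: "a > 0" using ab by simp
  let ?K = "b * F y + norm (a *\<^sub>R x - b *\<^sub>R y)"
  have "t \<le> ?K / a" if t_mem: "t \<in> (\<lambda>(c, x'). c * f x' - norm (c *\<^sub>R x' - x)) ` ({0..} \<times> X)" for t
  proof -
    obtain c x' where t: "t = c * f x' - norm (c *\<^sub>R x' - x)" "c \<ge> 0" "x' \<in> X"
      using t_mem by auto
    have "norm ((a * c) *\<^sub>R x' - b *\<^sub>R y)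
        \<le> norm ((a * c) *\<^sub>R x' - a *\<^sub>R x) + norm (a *\<^sub>R x - b *\<^sub>R y)"
      using norm_triangle_ineq[of "(a * c) *\<^sub>R x' - a *\<^sub>R x" "a *\<^sub>R x - b *\<^sub>R y"] by simp
    moreover have "norm ((a * c) *\<^sub>R x' - a *\<^sub>R x) = a * norm (c *\<^sub>R x' - x)"
      using a by (metis abs_of_pos norm_scaleR scaleR_right_diff_distrib scaleR_scaleR)
    moreover have "(a * c) * f x' - norm ((a * c) *\<^sub>R x' - b *\<^sub>R y) \<le> b * F y"
      using hom_envelope_scaled_term[OF xy(2) t(3) _ ab(2)] a t(2) by simp
    ultimately have "a * t \<le> ?K" unfolding t(1) by (simp add: algebra_simps)
    then show ?thesis using a by (simp add: field_simps)
  qed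
  then have "F x \<le> ?K / a"
    unfolding hom_envelope_def using xy(1) by (intro cSUP_least) auto
  then show ?thesis using a by (simp add: field_simps)
qed

lemma hom_envelope_in_D1: "F \<in> D1 X"
proof -
  have "1-lipschitz_on X F"
  proof (rule lipschitz_onI)
    fix x y assume "x \<in> X" "y \<in> X"
    then show "dist (F x) (F y) \<le> 1 * dist x y"
      using hom_envelope_D1_ineq[of x y 1 1] hom_envelope_D1_ineq[of y x 1 1]
      by (simp add: dist_real_def dist_norm abs_le_iff norm_minus_commute)
  qed simp
  then show ?thesis
    unfolding D1_def using lipschitz_on_continuous_on hom_envelope_D1_ineq by blast
qed

end

text \<open>A pair satisfying the relaxed inequality with a, b \<le> 1, shifted down by e,
  satisfies the exact inequality for all a, b \<ge> 0: rescale by s = max a b and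
  use that s e \<le> (a + b) e.\<close>
lemma D2eps_shift:
  assumes fg: "(f, g) \<in> D2eps X e" and e: "e \<ge> 0"
  shows "(\<lambda>x. f x - e, \<lambda>x. g x - e) \<in> D2 X"
proof -
  have cont: "continuous_on X f" "continuous_on X g"
    and ineq: "\<And>x y a b. x \<in> X \<Longrightarrow> y \<in> X \<Longrightarrow> a \<in> {0..1} \<Longrightarrow> b \<in> {0..1} \<Longrightarrow>
        a * f x + b * g y \<le> e + norm (a *\<^sub>R x - b *\<^sub>R y)"
    using fg unfolding D2eps_def by auto
  have "a * (f x - e) + b * (g y - e) \<le> norm (a *\<^sub>R x - b *\<^sub>R y)"
    if xy: "x \<in> X" "y \<in> X" and ab: "a \<ge> 0" "b \<ge> 0" for x y a b
  proof (cases "a = 0 \<and> b = 0")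
    case True then show ?thesis by simp
  next
    case False
    define s where "s = max a b"
    have s: "s > 0" using False ab unfolding s_def by auto
    have a1: "a / s \<in> {0..1}" and b1: "b / s \<in> {0..1}"
      using ab s unfolding s_def by (auto simp: field_simps)
    have "a * f x + b * g y = s * ((a / s) * f x + (b / s) * g y)"
      using s by (simp add: field_simps)
    also have "\<dots> \<le> s * (e + norm ((a / s) *\<^sub>R x - (b / s) *\<^sub>R y))"
      using ineq[OF xy a1 b1] s by (simp add: mult_left_mono)
    also have "\<dots> = s * e + norm (a *\<^sub>R x - b *\<^sub>R y)"
      using s by (simp add: distrib_left scaleR_right_diff_distrib
          flip: norm_scaleR[of s, simplified abs_of_pos[OF s]])
    also have "\<dots> \<le> (a + b) * e + norm (a *\<^sub>R x - b *\<^sub>R y)"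
      using e ab unfolding s_def by (simp add: mult_right_mono)
    finally show ?thesis by (simp add: algebra_simps)
  qed
  then show ?thesis unfolding D2_def using cont by (auto intro!: continuous_intros)
qed

lemma bdd_above_D1_values:
  assumes "compact X" "u \<in> Delta X" "v \<in> Delta X"
  shows "bdd_above ((\<lambda>f. integral\<^sup>L u f - integral\<^sup>L v f) ` D1 X)"
  using bdd_above_D2_values[OF assms] D1_imp_D2 unfolding bdd_above_def by fastforce

lemma d1_le_d2:
  assumes "compact X" "u \<in> Delta X" "v \<in> Delta X"
  shows "d1 X u v \<le> d2 X u v"
  unfolding d1_def d2_def
proof (rule cSUP_least)
  show "D1 X \<noteq> {}" using zero_in_D1 by blast
next
  fix f assume "f \<in> D1 X"
  have "integral\<^sup>L u f - integral\<^sup>L v f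
      = integral\<^sup>L u (fst (f, \<lambda>x. - f x)) + integral\<^sup>L v (snd (f, \<lambda>x. - f x))"
    by simp
  also have "\<dots> \<le> (SUP fg\<in>D2 X. integral\<^sup>L u (fst fg) + integral\<^sup>L v (snd fg))"
    by (rule cSUP_upper[OF D1_imp_D2[OF \<open>f \<in> D1 X\<close>] bdd_above_D2_values[OF assms]])
  finally show "integral\<^sup>L u f - integral\<^sup>L v f \<le> \<dots>" .
qed

text \<open>Each pair (f, g) of D2 is dominated by the pair (F, -F), F its envelope.\<close>
lemma d2_le_d1:
  assumes "compact X" "u \<in> Delta X" "v \<in> Delta X"
  shows "d2 X u v \<le> d1 X u v"
  unfolding d1_def d2_def
proof (rule cSUP_least)
  show "D2 X \<noteq> {}" by (rule D2_not_empty)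
next
  fix fg assume "fg \<in> D2 X"
  obtain f g where fg: "fg = (f, g)" "(f, g) \<in> D2 X"
    using \<open>fg \<in> D2 X\<close> by (cases fg) auto
  define F where "F = hom_envelope X f"
  have F_D1: "F \<in> D1 X"
    unfolding F_def by (rule hom_envelope_in_D1[OF fg(2)])
  have cont: "continuous_on X f" "continuous_on X g" "continuous_on X F"
    using fg(2) F_D1 unfolding D2_def D1_def by auto
  have "integral\<^sup>L u f \<le> integral\<^sup>L u F"
    using integral_mono_Delta[OF assms(1,2) cont(1,3)] le_hom_envelope[OF fg(2)]
    unfolding F_def by blast
  moreover have "integral\<^sup>L v g \<le> integral\<^sup>L v (\<lambda>x. - F x)"
    using integral_mono_Delta[OF assms(1,3) cont(2) continuous_on_minus[OF cont(3)]]
      hom_envelope_le_neg[OF fg(2)]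
    unfolding F_def by fastforce
  ultimately have "integral\<^sup>L u (fst fg) + integral\<^sup>L v (snd fg) \<le> integral\<^sup>L u F - integral\<^sup>L v F"
    unfolding fg(1) by simp
  also have "\<dots> \<le> (SUP f\<in>D1 X. integral\<^sup>L u f - integral\<^sup>L v f)"
    by (rule cSUP_upper[OF F_D1 bdd_above_D1_values[OF assms]])
  finally show "integral\<^sup>L u (fst fg) + integral\<^sup>L v (snd fg) \<le> \<dots>" .
qed

lemma d2_le_d2eps:
  assumes "compact X" "u \<in> Delta X" "v \<in> Delta X" "e \<ge> 0"
  shows "d2 X u v \<le> d2eps X e u v"
  unfolding d2_def d2eps_def
  using D2_not_empty D2_subset_D2eps[OF assms(4)] bdd_above_D2eps_values[OF assms(1-3)]
  by (intro cSUP_subset_mono) auto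

text \<open>Shifting a pair of D2eps down by e lowers the functional by exactly 2e.\<close>
lemma d2eps_le_d2:
  assumes "compact X" "u \<in> Delta X" "v \<in> Delta X" "e \<ge> 0"
  shows "d2eps X e u v \<le> d2 X u v + 2 * e"
  unfolding d2_def d2eps_def
proof (rule cSUP_least)
  show "D2eps X e \<noteq> {}"
    using D2_not_empty D2_subset_D2eps[OF assms(4)] by blast
next
  fix fg assume "fg \<in> D2eps X e"
  obtain f g where fg: "fg = (f, g)" "(f, g) \<in> D2eps X e"
    using \<open>fg \<in> D2eps X e\<close> by (cases fg) auto
  have "continuous_on X f" "continuous_on X g"
    using fg(2) unfolding D2eps_def by auto
  then have "integral\<^sup>L u (\<lambda>x. f x - e) + integral\<^sup>L v (\<lambda>x. g x - e)
      = integral\<^sup>L u f + integral\<^sup>L v g - 2 * e"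
    using integrable_Delta[OF assms(1,2)] integrable_Delta[OF assms(1,3)]
    by (simp add: measure_space_Delta[OF assms(2)] measure_space_Delta[OF assms(3)])
  moreover have "integral\<^sup>L u (\<lambda>x. f x - e) + integral\<^sup>L v (\<lambda>x. g x - e)
      \<le> (SUP fg\<in>D2 X. integral\<^sup>L u (fst fg) + integral\<^sup>L v (snd fg))"
    using cSUP_upper[OF D2eps_shift[OF fg(2) assms(4)] bdd_above_D2_values[OF assms(1-3)]]
    by simp
  ultimately show "integral\<^sup>L u (fst fg) + integral\<^sup>L v (snd fg)
      \<le> (SUP fg\<in>D2 X. integral\<^sup>L u (fst fg) + integral\<^sup>L v (snd fg)) + 2 * e"
    unfolding fg(1) by simp
qed

lemma d2plus_eq_d2:
  assumes "compact X" "u \<in> Delta X" "v \<in> Delta X"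
  shows "d2plus X u v = d2 X u v"
proof (rule antisym)
  have bdd: "bdd_below ((\<lambda>e. d2eps X e u v) ` {0<..})"
    by (intro bdd_belowI2[where m = "d2 X u v"]) (auto intro: d2_le_d2eps[OF assms])
  show "d2plus X u v \<le> d2 X u v"
  proof (rule field_le_epsilon)
    fix e :: real assume "e > 0"
    have "d2plus X u v \<le> d2eps X (e / 2) u v"
      unfolding d2plus_def by (rule cINF_lower[OF bdd]) (use \<open>e > 0\<close> in simp)
    also have "\<dots> \<le> d2 X u v + e"
      using d2eps_le_d2[OF assms, of "e / 2"] \<open>e > 0\<close> by simp
    finally show "d2plus X u v \<le> d2 X u v + e" .
  qed
  show "d2 X u v \<le> d2plus X u v"
    unfolding d2plus_def using d2_le_d2eps[OF assms] by (intro cINF_greatest) auto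
qed

theorem proposition1:
  fixes X :: "'v::real_normed_vector set" and u v :: "'v measure"
  assumes "compact X" and "u \<in> Delta X" and "v \<in> Delta X"
  shows "d1 X u v = d2 X u v \<and> d2 X u v = d2plus X u v"
  using d1_le_d2[OF assms] d2_le_d1[OF assms] d2plus_eq_d2[OF assms] by simp

end
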